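(* The following randomized mechanism for a combinatorial auction with item set $M$ and bidder set $N$ is universally obviously strategy-proof. Index the bidders in an arbitrary fixed order. Independently place each bidder in a set $S$ with probability $1/2$ and in a set $U$ otherwise. Bidders in $S$ receive nothing and pay nothing, and report their value for each item. For each item $j$, set price $p_j=\max_{i\in S}v_{ij}$ and let $n(j)$ be the smallest index among bidders in $\arg\max_{i\in S}v_{ij}$. Then, for each $i\in U$ in an arbitrary order, bidder $i$ purchases (paying $p_j$ for each) all previously unsold items $j$ for which either $v_{ij}>p_j$, or $v_{ij}=p_j$ and $i$ has a lower index than $n(j)$.
   Context: Bidders have additive valuations: bidder $i$ has private values $v_{ij}\ge0$ for items $j\in M$, and $v_i(A)=\sum_{j\in A}v_{ij}$; utilities are quasi-linear. In the mechanism, bidders in $U$ act by choosing which available items to purchase (equivalently, reporting which items they accept at the posted prices). A deterministic mechanism is a rooted tree: each internal node is assigned to one bidder, who sends one of the messages labeling the outgoing edges; each leaf is labeled with a feasible allocation and payments. A behavior $B_i$ specifies a message at every node of bidder $i$; a profile $B$ determines a root-to-leaf path $\mathrm{Path}(B)$ with bundle $f_i(B)$ and payment $p_i(B)$ for $i$. A strategy $\mathcal S_i$ maps each valuation $v_i$ in the domain to a behavior; it is obviously dominant if for every $v_i$, every node $u$ of $i$, every $B_{-i}$ and every profile $B'$ with $u\in\mathrm{Path}(\mathcal S_i(v_i),B_{-i})\cap\mathrm{Path}(B')$ and $B'_i$ sending at $u$ a message different from $\mathcal S_i(v_i)$'s, $v_i(f_i(\mathcal S_i(v_i),B_{-i}))-p_i(\mathcal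 S_i(v_i),B_{-i})\ge v_i(f_i(B'))-p_i(B')$. A deterministic mechanism is OSP if it has obviously dominant strategies for all bidders; a randomized mechanism (a distribution over deterministic mechanisms with strategies) is universally OSP if every mechanism in its support is OSP. *)

theory Defs
  imports "HOL-Probability.Probability"
begin

text \<open>A mechanism tree: internal nodes are assigned to a bidder (a natural number) and
carry the set of admissible messages (edge labels) together with the child reached by
each message; leaves carry an outcome.  Nodes are identified by the history
(list of messages) leading to them from the root.\<close>

datatype ('m, 'o) mtree = Leaf 'o | Node nat "'m set" "'m \<Rightarrow> ('m, 'o) mtree"

primrec subtree :: "('m, 'o) mtree \<Rightarrow> 'm list \<Rightarrow> ('m, 'o) mtree option" where
  "subtree T [] = Some T"
| "subtree T (m # h) =
     (case T of Leaf _ \<Rightarrow> None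
              | Node a ms c \<Rightarrow> (if m \<in> ms then subtree (c m) h else None))"

definition node_of :: "('m, 'o) mtree \<Rightarrow> nat \<Rightarrow> 'm list \<Rightarrow> bool" where
  "node_of T i h \<longleftrightarrow> (\<exists>ms c. subtree T h = Some (Node i ms c))"

definition msgs_at :: "('m, 'o) mtree \<Rightarrow> 'm list \<Rightarrow> 'm set" where
  "msgs_at T h = (case subtree T h of Some (Node a ms c) \<Rightarrow> ms | _ \<Rightarrow> {})"

definition valid_behavior :: "('m, 'o) mtree \<Rightarrow> nat \<Rightarrow> ('m list \<Rightarrow> 'm) \<Rightarrow> bool" where
  "valid_behavior T i b \<longleftrightarrow> (\<forall>h. node_of T i h \<longrightarrow> b h \<in> msgs_at T h)"

definition valid_profile :: "('m, 'o) mtree \<Rightarrow> (nat \<Rightarrow> 'm list \<Rightarrow> 'm) \<Rightarrow> bool" where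
  "valid_profile T B \<longleftrightarrow> (\<forall>i. valid_behavior T i (B i))"

definition on_path :: "('m, 'o) mtree \<Rightarrow> (nat \<Rightarrow> 'm list \<Rightarrow> 'm) \<Rightarrow> 'm list \<Rightarrow> bool" where
  "on_path T B h \<longleftrightarrow> subtree T h \<noteq> None \<and>
     (\<forall>k < length h. \<exists>a ms c. subtree T (take k h) = Some (Node a ms c) \<and> h ! k = B a (take k h))"

definition outcome :: "('m, 'o) mtree \<Rightarrow> (nat \<Rightarrow> 'm list \<Rightarrow> 'm) \<Rightarrow> 'o" where
  "outcome T B = (THE oc. \<exists>h. on_path T B h \<and> subtree T h = Some (Leaf oc))"

type_synonym 'i outc = "(nat \<Rightarrow> 'i set) \<times> (nat \<Rightarrow> real)"

definition utility :: "('i \<Rightarrow> real) \<Rightarrow> 'i outc \<Rightarrow> nat \<Rightarrow> real" where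
  "utility v oc i = sum v (fst oc i) - snd oc i"

text \<open>Additive valuations with nonnegative item values.\<close>
definition additive_dom :: "'i set \<Rightarrow> ('i \<Rightarrow> real) set" where
  "additive_dom M = {v. \<forall>j\<in>M. 0 \<le> v j}"

definition OSP :: "('m, 'i outc) mtree \<Rightarrow> ('i \<Rightarrow> real) set
                    \<Rightarrow> (nat \<Rightarrow> ('i \<Rightarrow> real) \<Rightarrow> 'm list \<Rightarrow> 'm) \<Rightarrow> bool" where
  "OSP T D \<sigma> \<longleftrightarrow>
    (\<forall>i. \<forall>v\<in>D. valid_behavior T i (\<sigma> i v) \<and>
       (\<forall>h B B'. node_of T i h \<and> valid_profile T B \<and> valid_profile T B'
          \<and> on_path T (B(i := \<sigma> i v)) h \<and> on_path T B' h \<and> B' i h \<noteq> \<sigma> i v h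
          \<longrightarrow> utility v (outcome T B') i \<le> utility v (outcome T (B(i := \<sigma> i v))) i))"

definition feasible :: "nat \<Rightarrow> 'i set \<Rightarrow> (nat \<Rightarrow> 'i set) \<Rightarrow> bool" where
  "feasible n M al \<longleftrightarrow> (\<forall>i. al i \<subseteq> M) \<and> (\<forall>i. i \<ge> n \<longrightarrow> al i = {})
     \<and> (\<forall>i k. i \<noteq> k \<longrightarrow> al i \<inter> al k = {})"

definition mechanism_wf :: "nat \<Rightarrow> 'i set \<Rightarrow> ('m, 'i outc) mtree \<Rightarrow> bool" where
  "mechanism_wf n M T \<longleftrightarrow>
     (\<forall>h a ms c. subtree T h = Some (Node a ms c) \<longrightarrow> ms \<noteq> {}) \<and>
     (\<forall>h oc. subtree T h = Some (Leaf oc) \<longrightarrow> feasible n M (fst oc))"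

definition universally_OSP :: "nat \<Rightarrow> 'i set \<Rightarrow> ('i \<Rightarrow> real) set
   \<Rightarrow> (('m, 'i outc) mtree \<times> (nat \<Rightarrow> ('i \<Rightarrow> real) \<Rightarrow> 'm list \<Rightarrow> 'm)) pmf \<Rightarrow> bool" where
  "universally_OSP n M D R \<longleftrightarrow>
     (\<forall>(T, \<sigma>) \<in> set_pmf R. mechanism_wf n M T \<and> OSP T D \<sigma>)"

datatype 'i msg = Report "'i \<Rightarrow> real" | Buy "'i set"

definition price :: "nat set \<Rightarrow> (nat \<Rightarrow> 'i \<Rightarrow> real) \<Rightarrow> 'i \<Rightarrow> real" where
  "price S rep j = (if S = {} then 0 else Max ((\<lambda>i. rep i j) ` S))"

text \<open>n(j): smallest index in S attaining the price (n, i.e. above all indices, if S empty).\<close>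
definition tiebreak :: "nat \<Rightarrow> nat set \<Rightarrow> (nat \<Rightarrow> 'i \<Rightarrow> real) \<Rightarrow> 'i \<Rightarrow> nat" where
  "tiebreak n S rep j = (if S = {} then n else (LEAST i. i \<in> S \<and> rep i j = price S rep j))"

primrec mk_U :: "nat list \<Rightarrow> ('i \<Rightarrow> real) \<Rightarrow> 'i set \<Rightarrow> (nat \<Rightarrow> 'i set)
                  \<Rightarrow> ('i msg, 'i outc) mtree" where
  "mk_U [] p avail al = Leaf (al, \<lambda>i. sum p (al i))"
| "mk_U (i # is) p avail al =
     Node i (Buy ` Pow avail)
       (\<lambda>m. case m of Buy A \<Rightarrow> mk_U is p (avail - A) (al(i := A))
                    | Report _ \<Rightarrow> Leaf (al, \<lambda>i. sum p (al i)))"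

primrec mk_S :: "nat list \<Rightarrow> nat set \<Rightarrow> nat list \<Rightarrow> 'i set \<Rightarrow> (nat \<Rightarrow> 'i \<Rightarrow> real)
                  \<Rightarrow> ('i msg, 'i outc) mtree" where
  "mk_S [] S Us M rep = mk_U Us (price S rep) M (\<lambda>_. {})"
| "mk_S (i # is) S Us M rep =
     Node i (Report ` additive_dom M)
       (\<lambda>m. case m of Report r \<Rightarrow> mk_S is S Us M (rep(i := r))
                    | Buy _ \<Rightarrow> Leaf (\<lambda>_. {}, \<lambda>_. 0))"

definition mech :: "'i set \<Rightarrow> nat set \<Rightarrow> nat list \<Rightarrow> ('i msg, 'i outc) mtree" where
  "mech M S Us = mk_S (sorted_list_of_set S) S Us M (\<lambda>_ _. 0)"

definition rep_of :: "nat list \<Rightarrow> 'i msg list \<Rightarrow> nat \<Rightarrow> 'i \<Rightarrow> real" where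
  "rep_of Sl h i = (case map_of (zip Sl h) i of Some (Report r) \<Rightarrow> r | _ \<Rightarrow> (\<lambda>_. 0))"

definition avail_of :: "'i set \<Rightarrow> 'i msg list \<Rightarrow> 'i set" where
  "avail_of M h = M - \<Union>{A. Buy A \<in> set h}"

definition strat :: "nat \<Rightarrow> 'i set \<Rightarrow> nat set \<Rightarrow> nat \<Rightarrow> ('i \<Rightarrow> real) \<Rightarrow> 'i msg list \<Rightarrow> 'i msg" where
  "strat n M S i v h =
     (if i \<in> S then Report v
      else (let rep = rep_of (sorted_list_of_set S) h; p = price S rep
            in Buy {j \<in> avail_of M h. p j < v j \<or> (p j = v j \<and> i < tiebreak n S rep j)}))"

definition rand_mech :: "nat \<Rightarrow> 'i set \<Rightarrow> (nat set \<Rightarrow> nat list)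
     \<Rightarrow> (('i msg, 'i outc) mtree \<times> (nat \<Rightarrow> ('i \<Rightarrow> real) \<Rightarrow> 'i msg list \<Rightarrow> 'i msg)) pmf" where
  "rand_mech n M ordU =
     map_pmf (\<lambda>f. let S = {i \<in> {0..<n}. f i} in (mech M S (ordU S), strat n M S))
             (Pi_pmf {0..<n} False (\<lambda>_. bernoulli_pmf (1/2)))"

end

theory Submission
  imports Defs "HOL-Library.Sublist"
begin

text \<open>Every tree in the support is OSP for a reason that does not involve randomness.
A bidder in \<open>S\<close> never receives anything, so all of her behaviours are equally good.
A bidder in \<open>U\<close> moves exactly once, after all reports are in; at that node the prices
and the set of unsold items are fixed, and her utility is the surplus of the bundle she
takes, whatever anybody else does. The prescribed bundle contains every unsold item of
positive surplus and no item of negative surplus (ties contribute zero, so the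
tie-breaking rule is irrelevant for incentives), hence it is a best reply at that node
against every behaviour of the others, which is obvious dominance.\<close>

primrec play :: "('m, 'o) mtree \<Rightarrow> (nat \<Rightarrow> 'm list \<Rightarrow> 'm) \<Rightarrow> 'o" where
  "play (Leaf oc) B = oc"
| "play (Node a ms c) B = play (c (B a [])) (\<lambda>i g. B i (B a [] # g))"

lemma subtree_append:
  "subtree T (h @ g) = (case subtree T h of None \<Rightarrow> None | Some T' \<Rightarrow> subtree T' g)"
  by (induction h arbitrary: T) (auto split: mtree.split)

lemma subtree_Leaf: "subtree (Leaf oc) h = Some T \<longleftrightarrow> h = [] \<and> T = Leaf oc"
  by (cases h) auto

lemma on_path_Cons:
  "on_path T B (m # h) \<longleftrightarrow>
   (\<exists>a ms c. T = Node a ms c \<and> m \<in> ms \<and> m = B a [] \<and> on_path (c m) (\<lambda>i g. B i (m # g)) h)"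
  by (cases T) (auto simp: on_path_def All_less_Suc2)

lemma play_subtree:
  "on_path T B h \<Longrightarrow> subtree T h = Some T' \<Longrightarrow> play T B = play T' (\<lambda>i g. B i (h @ g))"
  by (induction h arbitrary: T B) (auto simp: on_path_Cons)

lemma valid_profile_subtree:
  assumes "valid_profile T B" "subtree T h = Some T'"
  shows "valid_profile T' (\<lambda>i g. B i (h @ g))"
  unfolding valid_profile_def valid_behavior_def node_of_def
proof (intro allI impI)
  fix i g assume "\<exists>ms c. subtree T' g = Some (Node i ms c)"
  then have "node_of T i (h @ g)" and "msgs_at T (h @ g) = msgs_at T' g"
    using assms(2) by (auto simp: node_of_def msgs_at_def subtree_append)
  then show "B i (h @ g) \<in> msgs_at T' g"
    using assms(1) unfolding valid_profile_def valid_behavior_def by metis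
qed

lemma valid_profile_root:
  assumes "valid_profile (Node a ms c) B"
  shows "B a [] \<in> ms"
proof -
  have "node_of (Node a ms c) a []" by (simp add: node_of_def)
  with assms have "B a [] \<in> msgs_at (Node a ms c) []"
    unfolding valid_profile_def valid_behavior_def by blast
  then show ?thesis by (simp add: msgs_at_def)
qed

lemma valid_profile_reaches_leaf:
  "valid_profile T B \<Longrightarrow> \<exists>h oc. on_path T B h \<and> subtree T h = Some (Leaf oc)"
proof (induction T arbitrary: B)
  case (Leaf oc)
  then show ?case by (intro exI[of _ "[]"]) (simp add: on_path_def)
next
  case (Node a ms c)
  have m: "B a [] \<in> ms" using Node.prems by (rule valid_profile_root)
  then have "valid_profile (c (B a [])) (\<lambda>i g. B i (B a [] # g))"
    using valid_profile_subtree[OF Node.prems, of "[B a []]"] by simp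
  with Node.IH obtain h oc where "on_path (c (B a [])) (\<lambda>i g. B i (B a [] # g)) h"
    "subtree (c (B a [])) h = Some (Leaf oc)" by blast
  with m show ?case by (intro exI[of _ "B a [] # h"] exI[of _ oc]) (auto simp: on_path_Cons)
qed

lemma outcome_eq_play: "valid_profile T B \<Longrightarrow> outcome T B = play T B"
  unfolding outcome_def
  by (rule the_equality) (use valid_profile_reaches_leaf play_subtree in fastforce)+

text \<open>Both outcomes compared in the OSP condition are decided inside the subtree at the
deviation node, so it suffices to compare continuations from there.\<close>

lemma OSP_intro:
  assumes valid: "\<And>i v. v \<in> D \<Longrightarrow> valid_behavior T i (\<sigma> i v)"
    and dominant: "\<And>i v h ms c Y Y'. v \<in> D \<Longrightarrow> subtree T h = Some (Node i ms c) \<Longrightarrow>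
       valid_profile (Node i ms c) Y' \<Longrightarrow> Y i [] = \<sigma> i v h \<Longrightarrow>
       utility v (play (Node i ms c) Y') i \<le> utility v (play (Node i ms c) Y) i"
  shows "OSP T D \<sigma>"
  unfolding OSP_def
proof (intro allI ballI conjI impI)
  fix i v h B B'
  assume v: "v \<in> D"
  then show "valid_behavior T i (\<sigma> i v)" by (rule valid)
  assume "node_of T i h \<and> valid_profile T B \<and> valid_profile T B' \<and>
    on_path T (B(i := \<sigma> i v)) h \<and> on_path T B' h \<and> B' i h \<noteq> \<sigma> i v h"
  then have node: "node_of T i h" and vB: "valid_profile T B" and vB': "valid_profile T B'"
    and path: "on_path T (B(i := \<sigma> i v)) h" and path': "on_path T B' h" by auto
  obtain ms c where sub: "subtree T h = Some (Node i ms c)" using node by (auto simp: node_of_def)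
  have "valid_profile T (B(i := \<sigma> i v))"
    using vB valid[OF v] by (simp add: valid_profile_def)
  then have strategic:
    "outcome T (B(i := \<sigma> i v)) = play (Node i ms c) (\<lambda>k g. (B(i := \<sigma> i v)) k (h @ g))"
    using path sub by (simp add: outcome_eq_play play_subtree del: play.simps)
  have deviating: "outcome T B' = play (Node i ms c) (\<lambda>k g. B' k (h @ g))"
    using vB' path' sub by (simp add: outcome_eq_play play_subtree del: play.simps)
  have "valid_profile (Node i ms c) (\<lambda>k g. B' k (h @ g))"
    using vB' sub by (rule valid_profile_subtree)
  then show "utility v (outcome T B') i \<le> utility v (outcome T (B(i := \<sigma> i v))) i"
    unfolding strategic deviating by (rule dominant[OF v sub]) simp
qed

lemma mechanism_wf_Leaf [simp]: "mechanism_wf n M (Leaf oc) \<longleftrightarrow> feasible n M (fst oc)"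
  by (auto simp: mechanism_wf_def subtree_Leaf)

lemma subtree_Node_cases:
  assumes "subtree (Node a ms c) h = Some T"
  obtains "h = []" "T = Node a ms c"
  | m g where "m \<in> ms" "h = m # g" "subtree (c m) g = Some T"
  using assms by (cases h) (auto split: if_splits)

lemma mechanism_wf_Node:
  "mechanism_wf n M (Node a ms c) \<longleftrightarrow> ms \<noteq> {} \<and> (\<forall>m\<in>ms. mechanism_wf n M (c m))"
proof
  assume "mechanism_wf n M (Node a ms c)"
  moreover have "subtree (Node a ms c) (m # g) = subtree (c m) g" if "m \<in> ms" for m g
    using that by simp
  ultimately show "ms \<noteq> {} \<and> (\<forall>m\<in>ms. mechanism_wf n M (c m))"
    unfolding mechanism_wf_def by (metis subtree.simps(1))
next
  assume wf: "ms \<noteq> {} \<and> (\<forall>m\<in>ms. mechanism_wf n M (c m))"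
  show "mechanism_wf n M (Node a ms c)"
    unfolding mechanism_wf_def
  proof (intro conjI allI impI)
    fix h a' ms' c' assume "subtree (Node a ms c) h = Some (Node a' ms' c')"
    then show "ms' \<noteq> {}"
      by (cases rule: subtree_Node_cases) (use wf in \<open>unfold mechanism_wf_def, blast\<close>)+
  next
    fix h oc assume "subtree (Node a ms c) h = Some (Leaf oc)"
    then show "feasible n M (fst oc)"
      by (cases rule: subtree_Node_cases) (use wf in \<open>unfold mechanism_wf_def, blast\<close>)+
  qed
qed

lemma subtree_mk_U:
  "subtree (mk_U Us p avail al) h = Some T \<Longrightarrow>
   \<exists>Us' As al'. suffix Us' Us \<and> h = map Buy As \<and> T = mk_U Us' p (avail - \<Union>(set As)) al'"
proof (induction Us arbitrary: avail al h)
  case Nil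
  then show ?case by (auto simp: subtree_Leaf intro!: exI[of _ "[]"])
next
  case (Cons i Us)
  show ?case
  proof (cases h)
    case Nil
    with Cons.prems show ?thesis by (intro exI[of _ "i # Us"] exI[of _ "[]"] exI[of _ al]) auto
  next
    case (Cons m g)
    with Cons.prems obtain A where "m = Buy A"
      and "subtree (mk_U Us p (avail - A) (al(i := A))) g = Some T"
      by (auto split: if_splits)
    with Cons.IH obtain Us' As al' where "suffix Us' Us" "g = map Buy As"
      "T = mk_U Us' p (avail - A - \<Union>(set As)) al'" by blast
    with \<open>h = m # g\<close> \<open>m = Buy A\<close> show ?thesis
      by (intro exI[of _ Us'] exI[of _ "A # As"] exI[of _ al'])
        (auto simp: suffix_ConsI Diff_eq Int_assoc)
  qed
qed

lemma rep_of_Cons_Report: "rep_of (i # Sl) (Report r # h) = (rep_of Sl h)(i := r)"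
  by (auto simp: rep_of_def)

lemma subtree_mk_S:
  assumes "distinct Sl" "subtree (mk_S Sl S Us M rep) h = Some T"
  shows "(\<exists>i Sl' rep'. suffix (i # Sl') Sl \<and> T = mk_S (i # Sl') S Us M rep') \<or>
    (\<exists>rs g. h = map Report rs @ g \<and> length rs = length Sl \<and>
       subtree (mk_U Us (price S (override_on rep (rep_of Sl h) (set Sl))) M (\<lambda>_. {})) g = Some T)"
  using assms
proof (induction Sl arbitrary: rep h)
  case Nil
  then show ?case by simp
next
  case (Cons i Sl)
  show ?case
  proof (cases h)
    case Nil
    with Cons.prems show ?thesis by (intro disjI1 exI[of _ i] exI[of _ Sl] exI[of _ rep]) auto
  next
    case (Cons m h')
    with Cons.prems obtain r where m: "m = Report r"
      and sub: "subtree (mk_S Sl S Us M (rep(i := r))) h' = Some T"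
      by (auto split: if_splits)
    have "i \<notin> set Sl" "distinct Sl" using Cons.prems(1) by auto
    then have rep: "override_on (rep(i := r)) (rep_of Sl h') (set Sl) =
        override_on rep (rep_of (i # Sl) h) (set (i # Sl))"
      by (auto simp: override_on_def rep_of_Cons_Report m \<open>h = m # h'\<close>)
    from Cons.IH[OF \<open>distinct Sl\<close> sub] show ?thesis
    proof (elim disjE exE conjE)
      fix j Sl' rep' assume "suffix (j # Sl') Sl" "T = mk_S (j # Sl') S Us M rep'"
      then show ?thesis by (blast intro: suffix_ConsI)
    next
      fix rs g assume "h' = map Report rs @ g" "length rs = length Sl"
        "subtree (mk_U Us (price S (override_on (rep(i := r)) (rep_of Sl h') (set Sl))) M (\<lambda>_. {})) g
          = Some T"
      then show ?thesis
        unfolding rep using \<open>h = m # h'\<close> m by (intro disjI2 exI[of _ "r # rs"] exI[of _ g]) simp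
    qed
  qed
qed

lemma price_cong: "(\<And>i. i \<in> S \<Longrightarrow> r i = r' i) \<Longrightarrow> price S r = price S r'"
  unfolding price_def by (intro ext) (auto intro!: arg_cong[where f = Max] image_cong)

lemma avail_of_Report_Buy: "avail_of M (map Report rs @ map Buy As) = M - \<Union>(set As)"
proof -
  have "{A. Buy A \<in> set (map Report rs @ map Buy As)} = set As" by auto
  then show ?thesis by (simp add: avail_of_def)
qed

lemma mech_node_cases:
  assumes sub: "subtree (mech M S Us) h = Some (Node i ms c)"
    and "finite S" "distinct Us" "set Us \<inter> S = {}"
  obtains (reporting) Sl rep where "i \<in> S" "Node i ms c = mk_S (i # Sl) S Us M rep"
  | (purchasing) js al where "i \<notin> S" "i \<notin> set js"
      "Node i ms c = mk_U (i # js) (price S (rep_of (sorted_list_of_set S) h)) (avail_of M h) al"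
proof -
  define Sl where "Sl = sorted_list_of_set S"
  have "distinct Sl" "set Sl = S" using \<open>finite S\<close> by (auto simp: Sl_def)
  have "subtree (mk_S Sl S Us M (\<lambda>_ _. 0)) h = Some (Node i ms c)"
    using sub by (simp add: mech_def Sl_def)
  from subtree_mk_S[OF \<open>distinct Sl\<close> this] show ?thesis
  proof (elim disjE exE conjE)
    fix j Sl' rep assume "suffix (j # Sl') Sl" "Node i ms c = mk_S (j # Sl') S Us M rep"
    moreover from this have "j = i" by simp
    ultimately show ?thesis
      using reporting set_mono_suffix \<open>set Sl = S\<close> by fastforce
  next
    fix rs g
    assume h: "h = map Report rs @ g"
      and "subtree (mk_U Us (price S (override_on (\<lambda>_ _. 0) (rep_of Sl h) (set Sl))) M (\<lambda>_. {})) g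
        = Some (Node i ms c)"
    moreover have "price S (override_on (\<lambda>_ _. 0) (rep_of Sl h) (set Sl)) = price S (rep_of Sl h)"
      using \<open>set Sl = S\<close> by (intro price_cong) simp
    ultimately obtain Us' As al where "suffix Us' Us" "g = map Buy As"
      and node: "Node i ms c = mk_U Us' (price S (rep_of Sl h)) (M - \<Union>(set As)) al"
      using subtree_mk_U by fastforce
    then obtain js where "Us' = i # js" by (cases Us') auto
    with \<open>suffix Us' Us\<close> \<open>distinct Us\<close> \<open>set Us \<inter> S = {}\<close> have "i \<notin> S" "i \<notin> set js"
      using distinct_suffix set_mono_suffix by fastforce+
    moreover have "avail_of M h = M - \<Union>(set As)"
      using h \<open>g = map Buy As\<close> by (simp add: avail_of_Report_Buy)
    ultimately show ?thesis using purchasing node \<open>Us' = i # js\<close> by (simp add: Sl_def)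
  qed
qed

lemma utility_play_mk_U_notin:
  "i \<notin> set Us \<Longrightarrow> utility v (play (mk_U Us p avail al) Y) i = sum v (al i) - sum p (al i)"
proof (induction Us arbitrary: avail al Y)
  case Nil
  then show ?case by (simp add: utility_def)
next
  case (Cons k Us)
  then show ?case by (cases "Y k []") (simp_all add: utility_def)
qed

lemma utility_play_mk_U_first:
  "i \<notin> set Us \<Longrightarrow> Y i [] = Buy A \<Longrightarrow>
   utility v (play (mk_U (i # Us) p avail al) Y) i = sum v A - sum p A"
  by (simp add: utility_play_mk_U_notin)

lemma utility_play_mk_S_notin:
  "i \<notin> set Us \<Longrightarrow> utility v (play (mk_S Sl S Us M rep) Y) i = 0"
proof (induction Sl arbitrary: rep Y)
  case Nil
  then show ?case by (simp add: utility_play_mk_U_notin)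
next
  case (Cons k Sl)
  then show ?case by (cases "Y k []") (simp_all add: utility_def)
qed

lemma mechanism_wf_mk_U:
  assumes "feasible n M al" "avail \<subseteq> M" "\<forall>k. al k \<inter> avail = {}" "set Us \<subseteq> {..<n}"
  shows "mechanism_wf n M (mk_U Us p avail al)"
  using assms
proof (induction Us arbitrary: avail al)
  case Nil
  then show ?case by simp
next
  case (Cons i Us)
  have "mechanism_wf n M (mk_U Us p (avail - A) (al(i := A)))" if "A \<subseteq> avail" for A
  proof (rule Cons.IH)
    show "feasible n M (al(i := A))"
      using Cons.prems that unfolding feasible_def by auto
  qed (use Cons.prems that in auto)
  then show ?case by (auto simp: mechanism_wf_Node)
qed

lemma mechanism_wf_mk_S:
  "set Us \<subseteq> {..<n} \<Longrightarrow> mechanism_wf n M (mk_S Sl S Us M rep)"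
proof (induction Sl arbitrary: rep)
  case Nil
  then show ?case by (simp add: mechanism_wf_mk_U feasible_def)
next
  case (Cons i Sl)
  have "(\<lambda>_. 0) \<in> additive_dom M" by (simp add: additive_dom_def)
  with Cons show ?case by (auto simp: mechanism_wf_Node)
qed

lemma bundle_surplus_le:
  fixes v p :: "'a \<Rightarrow> real"
  assumes "finite A" "finite B" "\<forall>j\<in>A - B. v j \<le> p j" "\<forall>j\<in>B. p j \<le> v j"
  shows "sum v A - sum p A \<le> sum v B - sum p B"
proof -
  have "sum v A - sum p A = (\<Sum>j\<in>A. v j - p j)"
    by (simp add: sum_subtractf)
  also have "\<dots> = (\<Sum>j\<in>A \<inter> B. v j - p j) + (\<Sum>j\<in>A - B. v j - p j)"
    using \<open>finite A\<close> by (rule sum.Int_Diff)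
  also have "\<dots> \<le> (\<Sum>j\<in>A \<inter> B. v j - p j)"
    using assms(3) sum_nonpos[of "A - B" "\<lambda>j. v j - p j"] by simp
  also have "\<dots> \<le> (\<Sum>j\<in>B. v j - p j)"
    using assms(2,4) by (intro sum_mono2) auto
  also have "\<dots> = sum v B - sum p B"
    by (simp add: sum_subtractf)
  finally show ?thesis .
qed

lemma OSP_mech:
  assumes "finite M" "finite S" "distinct Us" "set Us \<inter> S = {}"
  shows "OSP (mech M S Us) (additive_dom M) (strat n M S)"
proof (rule OSP_intro)
  fix i v assume "v \<in> additive_dom M"
  show "valid_behavior (mech M S Us) i (strat n M S i v)"
    unfolding valid_behavior_def
  proof (intro allI impI)
    fix h assume "node_of (mech M S Us) i h"
    then obtain ms c where sub: "subtree (mech M S Us) h = Some (Node i ms c)"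
      by (auto simp: node_of_def)
    then have "msgs_at (mech M S Us) h = ms" by (simp add: msgs_at_def)
    with sub assms(2-4) \<open>v \<in> additive_dom M\<close>
    show "strat n M S i v h \<in> msgs_at (mech M S Us) h"
      by (cases rule: mech_node_cases) (auto simp: strat_def Let_def)
  qed
next
  fix i v h ms c and Y Y' :: "nat \<Rightarrow> 'a msg list \<Rightarrow> 'a msg"
  assume sub: "subtree (mech M S Us) h = Some (Node i ms c)"
    and valid': "valid_profile (Node i ms c) Y'" and Y: "Y i [] = strat n M S i v h"
  from sub assms(2-4)
  show "utility v (play (Node i ms c) Y') i \<le> utility v (play (Node i ms c) Y) i"
  proof (cases rule: mech_node_cases)
    case (reporting Sl rep)
    then have "i \<notin> set Us" using assms(4) by auto
    then show ?thesis unfolding reporting(2) utility_play_mk_S_notin[OF \<open>i \<notin> set Us\<close>] by simp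
  next
    case (purchasing js al)
    define p where "p = price S (rep_of (sorted_list_of_set S) h)"
    define avail where "avail = avail_of M h"
    define A where "A = {j \<in> avail. p j < v j \<or>
      (p j = v j \<and> i < tiebreak n S (rep_of (sorted_list_of_set S) h) j)}"
    have node: "Node i ms c = mk_U (i # js) p avail al"
      using purchasing by (simp add: p_def avail_def)
    have YA: "Y i [] = Buy A"
      using Y \<open>i \<notin> S\<close> by (simp add: strat_def Let_def A_def p_def avail_def)
    obtain A' where Y'A': "Y' i [] = Buy A'" and "A' \<subseteq> avail"
      using valid_profile_root[OF valid'] node by auto
    have "finite avail" using \<open>finite M\<close> by (simp add: avail_def avail_of_def)
    then show ?thesis
      unfolding node utility_play_mk_U_first[where Y = Y, OF \<open>i \<notin> set js\<close> YA]
        utility_play_mk_U_first[where Y = Y', OF \<open>i \<notin> set js\<close> Y'A']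
      using \<open>A' \<subseteq> avail\<close> by (intro bundle_surplus_le) (auto simp: A_def intro: finite_subset)
  qed
qed

lemma mechanism_wf_mech: "set Us \<subseteq> {..<n} \<Longrightarrow> mechanism_wf n M (mech M S Us)"
  by (simp add: mech_def mechanism_wf_mk_S)

theorem lemma4p2:
  fixes n :: nat and M :: "'i set" and ordU :: "nat set \<Rightarrow> nat list"
  assumes "finite M"
    and "\<forall>S \<subseteq> {0..<n}. distinct (ordU S) \<and> set (ordU S) = {0..<n} - S"
  shows "universally_OSP n M (additive_dom M) (rand_mech n M ordU)"
proof -
  have components: "mechanism_wf n M (mech M S (ordU S)) \<and>
      OSP (mech M S (ordU S)) (additive_dom M) (strat n M S)" if "S \<subseteq> {0..<n}" for S
  proof
    have U: "distinct (ordU S)" "set (ordU S) = {0..<n} - S" using assms(2) that by auto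
    then show "mechanism_wf n M (mech M S (ordU S))" by (auto intro: mechanism_wf_mech)
    show "OSP (mech M S (ordU S)) (additive_dom M) (strat n M S)"
      using U that assms(1) finite_subset by (intro OSP_mech) auto
  qed
  then show ?thesis
    unfolding universally_OSP_def rand_mech_def
    by (auto simp: Let_def intro!: components[THEN conjunct1] components[THEN conjunct2])
qed

end
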